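(* A function $f\in\mathcal{L}(G)$ is positive semi-definite (respectively positive definite) if and only if $\hat{f}_k\ge 0$ (respectively $\hat{f}_k>0$) for all $k\in\{1,\dots,n\}$. The corresponding kernel $K_f(v_i,v_j)=(\mathbf{C}_{e_j}f)(v_i)$ has the decomposition $$K_f(v,w)=\sum_{k=1}^n\hat{f}_k\,u_k(v)\,u_k(w)\quad(v,w\in V).$$ Further: (i) $f\in\mathcal{A}_{\mathbf{L}}$ and $f$ is positive semi-definite if and only if $\hat{f}_k\ge0$ for all $k$ and $\hat{f}_k=\hat{f}_{k'}$ whenever $\lambda_k=\lambda_{k'}$; (ii) $f\in\mathcal{B}_M$ and $f$ is positive semi-definite if and only if $\hat{f}_k\ge 0$ for all $k$ and $\hat{f}_k=0$ for all $k>M$; (iii) $f$ is conditionally positive definite with respect to the subspace $\mathcal{Y}=\mathrm{span}\{u_{k_1},\dots,u_{k_K}\}$ if and only if $\hat{f}_{k_1}>0,\dots,\hat{f}_{k_K}>0$.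
   Context: Let $G$ be a graph with vertex set $V=\{v_1,\dots,v_n\}$ and a symmetric, entrywise non-negative weighted adjacency matrix $\mathbf{A}$, degree matrix $\mathbf{D}=\mathrm{diag}(\sum_k\mathbf{A}_{ik})$ (assumed positive), and normalized Laplacian $\mathbf{L}=\mathbf{I}_n-\mathbf{D}^{-1/2}\mathbf{A}\mathbf{D}^{-1/2}$. Signals $x:V\to\mathbb{R}$ are identified with vectors in $\mathbb{R}^n$ (space $\mathcal{L}(G)$), and $e_1,\dots,e_n$ is the standard basis. Fix an orthonormal eigendecomposition $\mathbf{L}=\mathbf{U}\,\mathrm{diag}(\lambda_1,\dots,\lambda_n)\mathbf{U}^\intercal$, $\lambda_1\le\dots\le\lambda_n$, with columns $u_1,\dots,u_n$ of $\mathbf{U}$. Graph Fourier transform: $\hat{x}=\mathbf{U}^\intercal x$. Convolution operator: $\mathbf{C}_x=\mathbf{U}\,\mathrm{diag}(\hat{x})\,\mathbf{U}^\intercal$. Unit $f_{\mathbb{1}}=\sum_k u_k$; $\mathcal{A}_{\mathbf{L}}=\mathrm{span}\{f_{\mathbb{1}},\mathbf{L}f_{\mathbb{1}},\dots,\mathbf{L}^{n-1}f_{\mathbb{1}}\}$; for $M\le n$, $\mathcal{B}_M=\mathrm{span}\{u_1,\dots,u_M\}$. For $f\in\mathcal{L}(G)$ let $\mathbf{K}_f\in\mathbb{R}^{n\times n}$ have entries $(\mathbf{K}_f)_{ij}=(\mathbf{C}_{e_j}f)(v_i)$. The function $f$ is called positive semi-definite (positive definite) if $\mathbf{K}_f$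 is symmetric and positive semi-definite (symmetric and strictly positive definite), and conditionally positive definite with respect to a subspace $\mathcal{Y}$ if $y^\intercal\mathbf{K}_f y>0$ for all nonzero $y\in\mathcal{Y}$. *)

theory Defs
  imports Complex_Main
begin

text \<open>Conventions: the graph has vertices v_1..v_n, identified with indices 1..n.
 A signal x on V is a function nat => real; only its values at 1..n matter.
 An n x n matrix is a function nat => nat => real, with indices in 1..n.
 U i k is the i-th entry of the eigenvector u_k, i.e. u_k(v_i).\<close>

definition deg :: "nat \<Rightarrow> (nat \<Rightarrow> nat \<Rightarrow> real) \<Rightarrow> nat \<Rightarrow> real" where
  "deg n A i = (\<Sum>k=1..n. A i k)"

definition normLap :: "nat \<Rightarrow> (nat \<Rightarrow> nat \<Rightarrow> real) \<Rightarrow> nat \<Rightarrow> nat \<Rightarrow> real" where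
  "normLap n A i j = (if i = j then 1 else 0) - A i j / (sqrt (deg n A i) * sqrt (deg n A j))"

definition mat_apply :: "nat \<Rightarrow> (nat \<Rightarrow> nat \<Rightarrow> real) \<Rightarrow> (nat \<Rightarrow> real) \<Rightarrow> nat \<Rightarrow> real" where
  "mat_apply n M x i = (\<Sum>j=1..n. M i j * x j)"

definition gft :: "nat \<Rightarrow> (nat \<Rightarrow> nat \<Rightarrow> real) \<Rightarrow> (nat \<Rightarrow> real) \<Rightarrow> nat \<Rightarrow> real" where
  "gft n U x k = (\<Sum>i=1..n. U i k * x i)"

definition conv_op :: "nat \<Rightarrow> (nat \<Rightarrow> nat \<Rightarrow> real) \<Rightarrow> (nat \<Rightarrow> real) \<Rightarrow> nat \<Rightarrow> nat \<Rightarrow> real" where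
  "conv_op n U x i j = (\<Sum>k=1..n. U i k * gft n U x k * U j k)"

definition std_basis :: "nat \<Rightarrow> nat \<Rightarrow> real" where
  "std_basis j i = (if i = j then 1 else 0)"

definition kernel_mat :: "nat \<Rightarrow> (nat \<Rightarrow> nat \<Rightarrow> real) \<Rightarrow> (nat \<Rightarrow> real) \<Rightarrow> nat \<Rightarrow> nat \<Rightarrow> real" where
  "kernel_mat n U f i j = mat_apply n (conv_op n U (std_basis j)) f i"

definition quad_form :: "nat \<Rightarrow> (nat \<Rightarrow> nat \<Rightarrow> real) \<Rightarrow> (nat \<Rightarrow> real) \<Rightarrow> real" where
  "quad_form n M y = (\<Sum>i=1..n. \<Sum>j=1..n. y i * M i j * y j)"

definition sym_mat :: "nat \<Rightarrow> (nat \<Rightarrow> nat \<Rightarrow> real) \<Rightarrow> bool" where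
  "sym_mat n M \<longleftrightarrow> (\<forall>i\<in>{1..n}. \<forall>j\<in>{1..n}. M i j = M j i)"

definition nonzero_vec :: "nat \<Rightarrow> (nat \<Rightarrow> real) \<Rightarrow> bool" where
  "nonzero_vec n y \<longleftrightarrow> (\<exists>i\<in>{1..n}. y i \<noteq> 0)"

definition pos_semidef_fun :: "nat \<Rightarrow> (nat \<Rightarrow> nat \<Rightarrow> real) \<Rightarrow> (nat \<Rightarrow> real) \<Rightarrow> bool" where
  "pos_semidef_fun n U f \<longleftrightarrow> sym_mat n (kernel_mat n U f)
     \<and> (\<forall>y. quad_form n (kernel_mat n U f) y \<ge> 0)"

definition pos_def_fun :: "nat \<Rightarrow> (nat \<Rightarrow> nat \<Rightarrow> real) \<Rightarrow> (nat \<Rightarrow> real) \<Rightarrow> bool" where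
  "pos_def_fun n U f \<longleftrightarrow> sym_mat n (kernel_mat n U f)
     \<and> (\<forall>y. nonzero_vec n y \<longrightarrow> quad_form n (kernel_mat n U f) y > 0)"

definition eig_span :: "nat \<Rightarrow> (nat \<Rightarrow> nat \<Rightarrow> real) \<Rightarrow> nat set \<Rightarrow> (nat \<Rightarrow> real) set" where
  "eig_span n U S = {y. \<exists>c. \<forall>i\<in>{1..n}. y i = (\<Sum>k\<in>S. c k * U i k)}"

definition cond_pos_def_fun :: "nat \<Rightarrow> (nat \<Rightarrow> nat \<Rightarrow> real) \<Rightarrow> (nat \<Rightarrow> real) \<Rightarrow> (nat \<Rightarrow> real) set \<Rightarrow> bool" where
  "cond_pos_def_fun n U f Y \<longleftrightarrow>
     (\<forall>y\<in>Y. nonzero_vec n y \<longrightarrow> quad_form n (kernel_mat n U f) y > 0)"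

definition unit_fun :: "nat \<Rightarrow> (nat \<Rightarrow> nat \<Rightarrow> real) \<Rightarrow> nat \<Rightarrow> real" where
  "unit_fun n U i = (\<Sum>k=1..n. U i k)"

definition krylov_space :: "nat \<Rightarrow> (nat \<Rightarrow> nat \<Rightarrow> real) \<Rightarrow> (nat \<Rightarrow> nat \<Rightarrow> real) \<Rightarrow> (nat \<Rightarrow> real) set" where
  "krylov_space n L U = {y. \<exists>c. \<forall>i\<in>{1..n}.
      y i = (\<Sum>m<n. c m * ((mat_apply n L ^^ m) (unit_fun n U)) i)}"

end

theory Submission
  imports Defs "Jordan_Normal_Form.Determinant" "HOL-Computational_Algebra.Polynomial"
begin

(* In the eigenbasis the kernel matrix is diagonal with entries hat f_k, so
   y^T K_f y = sum_k hat f_k (hat y_k)^2. Nonnegativity (positivity) of hat f on the Fourier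
   support of the admissible y is therefore sufficient, and testing with the eigenvectors
   y = u_k shows that it is necessary. Membership in the subspaces is read off the transform
   as well: f lies in B_M iff hat f vanishes beyond M, and since L^m f_1 has transform
   lambda_k^m, f lies in A_L iff hat f_k is a polynomial of degree below n in lambda_k, which
   by Lagrange interpolation happens iff hat f is constant on each eigenspace. *)

lemma gft_linear:
  "gft n U (\<lambda>i. \<Sum>m\<in>M. c m * x m i) k = (\<Sum>m\<in>M. c m * gft n U (x m) k)"
  unfolding gft_def by (simp add: sum_distrib_left mult_ac sum.swap[of _ M])

lemma kernel_mat_spectral:
  assumes "j \<in> {1..n}"
  shows "kernel_mat n U f i j = (\<Sum>k=1..n. gft n U f k * U i k * U j k)"
proof -
  have gft_basis: "gft n U (std_basis j) k = U j k" for k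
    using assms by (simp add: gft_def std_basis_def if_distrib[of "times _"] cong: if_cong)
  have "kernel_mat n U f i j = (\<Sum>l=1..n. (\<Sum>k=1..n. U i k * U j k * U l k) * f l)"
    by (simp add: kernel_mat_def mat_apply_def conv_op_def gft_basis)
  also have "\<dots> = (\<Sum>l=1..n. \<Sum>k=1..n. U i k * U j k * (U l k * f l))"
    by (simp add: sum_distrib_left sum_distrib_right mult_ac)
  also have "\<dots> = (\<Sum>k=1..n. U i k * U j k * (\<Sum>l=1..n. U l k * f l))"
    by (subst sum.swap) (simp add: sum_distrib_left)
  finally show ?thesis by (simp add: gft_def mult_ac)
qed

lemma sym_mat_kernel_mat: "sym_mat n (kernel_mat n U f)"
  unfolding sym_mat_def by (auto simp: kernel_mat_spectral mult_ac)

lemma quad_form_kernel_mat: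
  "quad_form n (kernel_mat n U f) y = (\<Sum>k=1..n. gft n U f k * (gft n U y k)\<^sup>2)"
proof -
  have "quad_form n (kernel_mat n U f) y =
      (\<Sum>i=1..n. \<Sum>j=1..n. \<Sum>k=1..n. gft n U f k * (U i k * y i) * (U j k * y j))"
    unfolding quad_form_def
    by (intro sum.cong refl) (simp add: kernel_mat_spectral sum_distrib_left sum_distrib_right mult_ac)
  also have "\<dots> = (\<Sum>i=1..n. \<Sum>k=1..n. \<Sum>j=1..n. gft n U f k * (U i k * y i) * (U j k * y j))"
    by (intro sum.cong refl sum.swap)
  also have "\<dots> = (\<Sum>k=1..n. \<Sum>i=1..n. \<Sum>j=1..n. gft n U f k * (U i k * y i) * (U j k * y j))"
    by (rule sum.swap)
  also have "\<dots> = (\<Sum>k=1..n. gft n U f k * ((\<Sum>i=1..n. U i k * y i) * (\<Sum>j=1..n. U j k * y j)))"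
    by (simp add: sum_distrib_left sum_distrib_right mult_ac)
  finally show ?thesis by (simp add: gft_def power2_eq_square)
qed

lemma interpolating_poly_exists:
  fixes X :: "'a::field set"
  assumes "finite X"
  shows "\<exists>p. degree p \<le> card X - 1 \<and> (\<forall>x\<in>X. poly p x = g x)"
  using assms
proof (induction X rule: finite_induct)
  case empty
  show ?case by (intro exI[of _ 0]) simp
next
  case (insert a X)
  then obtain p where p: "degree p \<le> card X - 1" "\<forall>x\<in>X. poly p x = g x" by blast
  define q where "q = (\<Prod>x\<in>X. [:-x, 1:])"
  define r where "r = p + smult ((g a - poly p a) / (\<Prod>x\<in>X. a - x)) q"
  have poly_q: "poly q x = (\<Prod>y\<in>X. x - y)" for x
    unfolding q_def by (simp add: poly_prod)
  have "degree q \<le> (\<Sum>x\<in>X. degree [:-x, 1:])"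
    unfolding q_def using degree_prod_sum_le[OF insert(1), of "\<lambda>x. [:-x, 1:]"] by (simp add: o_def)
  then have "degree q \<le> card X" by simp
  then have "degree r \<le> card X"
    unfolding r_def using p(1) degree_smult_le[of _ q]
    by (intro order.trans[OF degree_add_le_max]) auto
  moreover have "poly r x = g x" if "x \<in> insert a X" for x
  proof (cases "x = a")
    case True
    have "(\<Prod>x\<in>X. a - x) \<noteq> 0" using insert(1,2) by auto
    with True show ?thesis by (simp add: r_def poly_q)
  next
    case False
    with that have "x \<in> X" by simp
    then have "poly q x = 0" by (simp add: poly_q insert(1))
    with \<open>x \<in> X\<close> show ?thesis using p(2) by (simp add: r_def)
  qed
  ultimately show ?case using insert by auto
qed

lemma poly_eq_sum_coeffs_below:
  fixes p :: "'a::comm_semiring_1 poly"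
  assumes "degree p < n"
  shows "poly p x = (\<Sum>m<n. coeff p m * x ^ m)"
  unfolding poly_altdef
  by (rule sum.mono_neutral_left) (use assms in \<open>auto simp: coeff_eq_0\<close>)

lemma ex_low_degree_poly_iff_factors_through:
  fixes lam x :: "'b \<Rightarrow> 'a::field"
  assumes "finite K" and "card K \<le> n"
  shows "(\<exists>c. \<forall>k\<in>K. x k = (\<Sum>m<n. c m * lam k ^ m)) \<longleftrightarrow>
    (\<forall>k\<in>K. \<forall>k'\<in>K. lam k = lam k' \<longrightarrow> x k = x k')"
proof
  assume factors: "\<forall>k\<in>K. \<forall>k'\<in>K. lam k = lam k' \<longrightarrow> x k = x k'"
  show "\<exists>c. \<forall>k\<in>K. x k = (\<Sum>m<n. c m * lam k ^ m)"
  proof (cases "K = {}")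
    case False
    define g where "g \<mu> = x (SOME k. k \<in> K \<and> lam k = \<mu>)" for \<mu>
    have g: "g (lam k) = x k" if "k \<in> K" for k
      unfolding g_def using someI_ex[of "\<lambda>k'. k' \<in> K \<and> lam k' = lam k"] that factors by blast
    obtain p where p: "degree p \<le> card (lam ` K) - 1" "\<forall>\<mu>\<in>lam ` K. poly p \<mu> = g \<mu>"
      using interpolating_poly_exists[of "lam ` K" g] assms(1) by blast
    have "card (lam ` K) \<le> n" "card (lam ` K) > 0"
      using card_image_le[OF assms(1), of lam] assms False by (auto simp: card_gt_0_iff)
    then have "degree p < n" using p(1) by linarith
    then have "\<forall>k\<in>K. x k = (\<Sum>m<n. coeff p m * lam k ^ m)"
      using p(2) g by (simp add: poly_eq_sum_coeffs_below)
    then show ?thesis by blast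
  qed simp
qed auto

locale orthonormal_columns =
  fixes n :: nat and U :: "nat \<Rightarrow> nat \<Rightarrow> real"
  assumes orthonormal:
    "\<forall>k\<in>{1..n}. \<forall>l\<in>{1..n}. (\<Sum>i=1..n. U i k * U i l) = (if k = l then 1 else 0)"
begin

lemma orthonormal_rows:
  assumes "i \<in> {1..n}" and "j \<in> {1..n}"
  shows "(\<Sum>k=1..n. U i k * U j k) = (if i = j then 1 else 0)"
proof -
  define V where "V = mat n n (\<lambda>(i, j). U (Suc i) (Suc j))"
  have V_carrier: "V \<in> carrier_mat n n" "transpose_mat V \<in> carrier_mat n n"
    unfolding V_def by auto
  have "transpose_mat V * V = 1\<^sub>m n"
  proof (rule eq_matI)
    fix a b assume "a < dim_row (1\<^sub>m n)" and "b < dim_col (1\<^sub>m n)"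
    then show "(transpose_mat V * V) $$ (a, b) = 1\<^sub>m n $$ (a, b)"
      using orthonormal sum.atLeast1_atMost_eq[of "\<lambda>i. U i (Suc a) * U i (Suc b)" n]
      by (simp add: V_def scalar_prod_def atLeast0LessThan)
  qed (simp_all add: V_def)
  then have "V * transpose_mat V = 1\<^sub>m n"
    using mat_mult_left_right_inverse[OF V_carrier(2,1)] by blast
  obtain a b where ab: "i = Suc a" "j = Suc b" "a < n" "b < n"
    using assms by (metis Suc_le_D Suc_le_lessD atLeastAtMost_iff One_nat_def)
  have "(V * transpose_mat V) $$ (a, b) = (\<Sum>k<n. U i (Suc k) * U j (Suc k))"
    using ab by (simp add: V_def scalar_prod_def atLeast0LessThan)
  with \<open>V * transpose_mat V = 1\<^sub>m n\<close> show ?thesis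
    using ab sum.atLeast1_atMost_eq[of "\<lambda>k. U i k * U j k" n] by simp
qed

lemma gft_eigvec:
  assumes "k \<in> {1..n}" and "l \<in> {1..n}"
  shows "gft n U (\<lambda>i. U i k) l = (if l = k then 1 else 0)"
  using orthonormal assms by (simp add: gft_def)

lemma gft_eigvec_comb:
  assumes "S \<subseteq> {1..n}" and "k \<in> {1..n}"
  shows "gft n U (\<lambda>i. \<Sum>l\<in>S. c l * U i l) k = (if k \<in> S then c k else 0)"
proof -
  have "gft n U (\<lambda>i. \<Sum>l\<in>S. c l * U i l) k = (\<Sum>l\<in>S. c l * (if k = l then 1 else 0))"
    unfolding gft_linear using assms by (intro sum.cong) (auto simp: gft_eigvec)
  then show ?thesis
    using finite_subset[OF assms(1)] by (simp add: if_distrib[of "times _"] cong: if_cong)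
qed

lemma inverse_gft:
  assumes "i \<in> {1..n}"
  shows "x i = (\<Sum>k=1..n. gft n U x k * U i k)"
proof -
  have "(\<Sum>k=1..n. gft n U x k * U i k) = (\<Sum>k=1..n. \<Sum>j=1..n. x j * (U i k * U j k))"
    unfolding gft_def by (simp add: sum_distrib_left sum_distrib_right mult_ac)
  also have "\<dots> = (\<Sum>j=1..n. x j * (\<Sum>k=1..n. U i k * U j k))"
    by (subst sum.swap) (simp add: sum_distrib_left)
  also have "\<dots> = (\<Sum>j=1..n. x j * (if i = j then 1 else 0))"
    by (intro sum.cong refl) (use assms orthonormal_rows in auto)
  finally show ?thesis
    using assms by (simp add: if_distrib[of "times _"] cong: if_cong)
qed

lemma signal_eq_iff_gft_eq:
  "(\<forall>i\<in>{1..n}. x i = y i) \<longleftrightarrow> (\<forall>k\<in>{1..n}. gft n U x k = gft n U y k)"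
  using inverse_gft[of _ x] inverse_gft[of _ y] by (auto simp: gft_def)

lemma nonzero_vec_iff_gft:
  "nonzero_vec n x \<longleftrightarrow> (\<exists>k\<in>{1..n}. gft n U x k \<noteq> 0)"
  using signal_eq_iff_gft_eq[of x "\<lambda>_. 0"] by (auto simp: nonzero_vec_def gft_def)

lemma eig_span_iff_gft_vanishes:
  assumes "S \<subseteq> {1..n}"
  shows "x \<in> eig_span n U S \<longleftrightarrow> (\<forall>k\<in>{1..n}. k \<notin> S \<longrightarrow> gft n U x k = 0)"
proof
  assume "x \<in> eig_span n U S"
  then obtain c where "\<forall>i\<in>{1..n}. x i = (\<Sum>l\<in>S. c l * U i l)"
    unfolding eig_span_def by blast
  then have "\<forall>k\<in>{1..n}. gft n U x k = gft n U (\<lambda>i. \<Sum>l\<in>S. c l * U i l) k"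
    by (rule signal_eq_iff_gft_eq[THEN iffD1])
  then show "\<forall>k\<in>{1..n}. k \<notin> S \<longrightarrow> gft n U x k = 0"
    by (simp add: gft_eigvec_comb[OF assms])
next
  assume "\<forall>k\<in>{1..n}. k \<notin> S \<longrightarrow> gft n U x k = 0"
  then have "\<forall>k\<in>{1..n}. gft n U x k = gft n U (\<lambda>i. \<Sum>l\<in>S. gft n U x l * U i l) k"
    by (simp add: gft_eigvec_comb[OF assms])
  then have "\<forall>i\<in>{1..n}. x i = (\<Sum>l\<in>S. gft n U x l * U i l)"
    by (rule signal_eq_iff_gft_eq[THEN iffD2])
  then show "x \<in> eig_span n U S"
    unfolding eig_span_def by blast
qed

lemma quad_form_kernel_mat_eigvec:
  assumes "k \<in> {1..n}"
  shows "quad_form n (kernel_mat n U f) (\<lambda>i. U i k) = gft n U f k"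
proof -
  have "quad_form n (kernel_mat n U f) (\<lambda>i. U i k) =
      (\<Sum>l=1..n. gft n U f l * (if k = l then 1 else 0))"
    unfolding quad_form_kernel_mat using assms by (intro sum.cong) (auto simp: gft_eigvec)
  then show ?thesis
    using assms by (simp add: if_distrib[of "times _"] cong: if_cong)
qed

lemma pos_semidef_fun_iff: "pos_semidef_fun n U f \<longleftrightarrow> (\<forall>k\<in>{1..n}. gft n U f k \<ge> 0)"
proof
  assume "pos_semidef_fun n U f"
  then show "\<forall>k\<in>{1..n}. gft n U f k \<ge> 0"
    unfolding pos_semidef_fun_def using quad_form_kernel_mat_eigvec by metis
next
  assume "\<forall>k\<in>{1..n}. gft n U f k \<ge> 0"
  then show "pos_semidef_fun n U f"
    unfolding pos_semidef_fun_def quad_form_kernel_mat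
    using sym_mat_kernel_mat by (auto intro!: sum_nonneg)
qed

lemma cond_pos_def_fun_eig_span_iff:
  assumes "S \<subseteq> {1..n}"
  shows "cond_pos_def_fun n U f (eig_span n U S) \<longleftrightarrow> (\<forall>k\<in>S. gft n U f k > 0)"
proof
  assume cpd: "cond_pos_def_fun n U f (eig_span n U S)"
  show "\<forall>k\<in>S. gft n U f k > 0"
  proof
    fix k assume "k \<in> S"
    with assms have "(\<lambda>i. U i k) \<in> eig_span n U S" "nonzero_vec n (\<lambda>i. U i k)"
      by (auto simp: eig_span_iff_gft_vanishes nonzero_vec_iff_gft gft_eigvec)
    then show "gft n U f k > 0"
      using cpd quad_form_kernel_mat_eigvec \<open>k \<in> S\<close> assms
      unfolding cond_pos_def_fun_def by fastforce
  qed
next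
  assume pos: "\<forall>k\<in>S. gft n U f k > 0"
  show "cond_pos_def_fun n U f (eig_span n U S)"
    unfolding cond_pos_def_fun_def
  proof (intro ballI impI)
    fix y assume "y \<in> eig_span n U S" and "nonzero_vec n y"
    then obtain k where k: "k \<in> S" "gft n U y k \<noteq> 0"
      using assms by (auto simp: eig_span_iff_gft_vanishes nonzero_vec_iff_gft)
    have nonneg: "gft n U f l * (gft n U y l)\<^sup>2 \<ge> 0" if "l \<in> {1..n}" for l
      using that pos \<open>y \<in> eig_span n U S\<close> assms
      by (cases "l \<in> S") (auto simp: eig_span_iff_gft_vanishes less_imp_le)
    show "quad_form n (kernel_mat n U f) y > 0"
      unfolding quad_form_kernel_mat
      by (rule sum_pos2[where i = k, OF _ _ _ nonneg]) (use k pos assms in auto)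
  qed
qed

lemma pos_def_fun_iff: "pos_def_fun n U f \<longleftrightarrow> (\<forall>k\<in>{1..n}. gft n U f k > 0)"
proof -
  have "eig_span n U {1..n} = UNIV"
    using eig_span_iff_gft_vanishes[of "{1..n}"] by auto
  then show ?thesis
    using cond_pos_def_fun_eig_span_iff[of "{1..n}" f] sym_mat_kernel_mat
    by (simp add: pos_def_fun_def cond_pos_def_fun_def)
qed

context
  fixes L :: "nat \<Rightarrow> nat \<Rightarrow> real" and lam :: "nat \<Rightarrow> real"
  assumes spectral: "\<forall>i\<in>{1..n}. \<forall>j\<in>{1..n}. L i j = (\<Sum>k=1..n. U i k * lam k * U j k)"
begin

lemma gft_mat_apply:
  assumes "k \<in> {1..n}"
  shows "gft n U (mat_apply n L x) k = lam k * gft n U x k"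
proof -
  have "\<forall>i\<in>{1..n}. mat_apply n L x i = (\<Sum>l\<in>{1..n}. (lam l * gft n U x l) * U i l)"
  proof
    fix i assume "i \<in> {1..n}"
    have "mat_apply n L x i = (\<Sum>j=1..n. \<Sum>l=1..n. lam l * (U j l * x j) * U i l)"
      unfolding mat_apply_def using \<open>i \<in> {1..n}\<close> spectral
      by (intro sum.cong) (auto simp: sum_distrib_left sum_distrib_right mult_ac)
    also have "\<dots> = (\<Sum>l\<in>{1..n}. (lam l * gft n U x l) * U i l)"
      by (subst sum.swap) (simp add: gft_def sum_distrib_left sum_distrib_right mult_ac)
    finally show "mat_apply n L x i = (\<Sum>l\<in>{1..n}. (lam l * gft n U x l) * U i l)" .
  qed
  then have "\<forall>k\<in>{1..n}. gft n U (mat_apply n L x) k =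
      gft n U (\<lambda>i. \<Sum>l\<in>{1..n}. (lam l * gft n U x l) * U i l) k"
    by (rule signal_eq_iff_gft_eq[THEN iffD1])
  with assms show ?thesis
    using gft_eigvec_comb[OF order_refl assms] by simp
qed

lemma gft_iterate_unit_fun:
  assumes "k \<in> {1..n}"
  shows "gft n U ((mat_apply n L ^^ m) (unit_fun n U)) k = lam k ^ m"
proof (induction m)
  case 0
  have "unit_fun n U = (\<lambda>i. \<Sum>l\<in>{1..n}. 1 * U i l)"
    unfolding unit_fun_def by simp
  then show ?case
    using gft_eigvec_comb[OF order_refl assms, of "\<lambda>_. 1"] assms by simp
next
  case (Suc m)
  then show ?case using gft_mat_apply[OF assms] by simp
qed

lemma krylov_space_iff:
  "f \<in> krylov_space n L U \<longleftrightarrow> (\<exists>c. \<forall>k\<in>{1..n}. gft n U f k = (\<Sum>m<n. c m * lam k ^ m))"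
proof -
  have "(\<forall>i\<in>{1..n}. f i = (\<Sum>m<n. c m * (mat_apply n L ^^ m) (unit_fun n U) i)) \<longleftrightarrow>
      (\<forall>k\<in>{1..n}. gft n U f k = (\<Sum>m<n. c m * lam k ^ m))" for c
    using signal_eq_iff_gft_eq[of f "\<lambda>i. \<Sum>m<n. c m * (mat_apply n L ^^ m) (unit_fun n U) i"]
    by (simp add: gft_linear gft_iterate_unit_fun)
  then show ?thesis
    unfolding krylov_space_def by simp
qed

end

end

theorem theorem1:
  fixes n :: nat and A U :: "nat \<Rightarrow> nat \<Rightarrow> real" and lam :: "nat \<Rightarrow> real"
  assumes A_sym: "\<forall>i\<in>{1..n}. \<forall>j\<in>{1..n}. A i j = A j i"
    and A_nonneg: "\<forall>i\<in>{1..n}. \<forall>j\<in>{1..n}. A i j \<ge> 0"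
    and deg_pos: "\<forall>i\<in>{1..n}. deg n A i > 0"
    and U_orth: "\<forall>k\<in>{1..n}. \<forall>l\<in>{1..n}. (\<Sum>i=1..n. U i k * U i l) = (if k = l then 1 else 0)"
    and L_eig: "\<forall>i\<in>{1..n}. \<forall>j\<in>{1..n}. normLap n A i j = (\<Sum>k=1..n. U i k * lam k * U j k)"
    and lam_sorted: "\<forall>k\<in>{1..n}. \<forall>k'\<in>{1..n}. k \<le> k' \<longrightarrow> lam k \<le> lam k'"
  shows
    "(\<forall>f. pos_semidef_fun n U f \<longleftrightarrow> (\<forall>k\<in>{1..n}. gft n U f k \<ge> 0))
     \<and> (\<forall>f. pos_def_fun n U f \<longleftrightarrow> (\<forall>k\<in>{1..n}. gft n U f k > 0))
     \<and> (\<forall>f. \<forall>i\<in>{1..n}. \<forall>j\<in>{1..n}.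
           kernel_mat n U f i j = (\<Sum>k=1..n. gft n U f k * U i k * U j k))
     \<and> (\<forall>f. (f \<in> krylov_space n (normLap n A) U \<and> pos_semidef_fun n U f) \<longleftrightarrow>
           ((\<forall>k\<in>{1..n}. gft n U f k \<ge> 0) \<and>
            (\<forall>k\<in>{1..n}. \<forall>k'\<in>{1..n}. lam k = lam k' \<longrightarrow> gft n U f k = gft n U f k')))
     \<and> (\<forall>M f. M \<le> n \<longrightarrow>
           ((f \<in> eig_span n U {1..M} \<and> pos_semidef_fun n U f) \<longleftrightarrow>
            ((\<forall>k\<in>{1..n}. gft n U f k \<ge> 0) \<and> (\<forall>k\<in>{1..n}. k > M \<longrightarrow> gft n U f k = 0))))
     \<and> (\<forall>S f. S \<subseteq> {1..n} \<longrightarrow>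
           (cond_pos_def_fun n U f (eig_span n U S) \<longleftrightarrow> (\<forall>k\<in>S. gft n U f k > 0)))"
proof -
  interpret orthonormal_columns n U
    using U_orth by unfold_locales
  have krylov: "f \<in> krylov_space n (normLap n A) U \<longleftrightarrow>
      (\<forall>k\<in>{1..n}. \<forall>k'\<in>{1..n}. lam k = lam k' \<longrightarrow> gft n U f k = gft n U f k')" for f
    using krylov_space_iff[OF L_eig]
      ex_low_degree_poly_iff_factors_through[of "{1..n}" n "gft n U f" lam] by simp
  have band_limited: "f \<in> eig_span n U {1..M} \<longleftrightarrow> (\<forall>k\<in>{1..n}. k > M \<longrightarrow> gft n U f k = 0)"
    if "M \<le> n" for M f
    using that eig_span_iff_gft_vanishes[of "{1..M}" f] by auto
  show ?thesis
    using pos_semidef_fun_iff pos_def_fun_iff kernel_mat_spectral krylov band_limited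
      cond_pos_def_fun_eig_span_iff by auto
qed

end
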